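(* Let $n$ and $\delta$ be given, and let $m$ be an integer. Set $$\ell=\frac{2m-n-2\log(1/\delta)}{3},\qquad v=\frac{n-\ell}{2},$$ where the parameters are assumed to be such that $\ell$ and $v$ are nonnegative integers. Consider the following construction, for a chosen representation of $\mathbb{F}_{2^{n-v}}$ as $(n-v)$-bit strings given by coordinates in a basis over $\mathbb{F}_2$ (so that field addition is bitwise XOR). $\mathsf{Gen}(w)$, for $w\in\{0,1\}^n$: 1. Parse $w=a\|b$ with $a\in\{0,1\}^{n-v}$, viewed as an element of $\mathbb{F}_{2^{n-v}}$, and $b\in\{0,1\}^v$. 2. Choose $i$ uniformly from $\mathbb{F}_{2^{n-v}}$. 3. Output $R=[ia]_{v+1}^{n-v}$ (so $|R|=\ell$) and $P=(i,\sigma)$, where $\sigma=[ia]_1^v\oplus b$. $\mathsf{Rep}(w,(i',\sigma'))$: - Output $[i'a]_{v+1}^{n-v}$ if $\sigma'=[i'a]_1^v\oplus b$. - Otherwise output $\perp$. Then there exist a basis of $\mathbb{F}_{2^{n-v}}$ over $\mathbb{F}_2$, a distribution $W$ on $\{0,1\}^n$ with $\mathbf{H}_\infty(W)=m$, and an adversary $A$ with the following property. Sample $w\leftarrow W$, let $(R,P)=\mathsf{Gen}(w)$, and let $P'=A(R,P)$. Then, with probability at least $\delta/2$, both $P'\ne P$ and $\mathsf{Rep}(w,P')\ne\perp$ hold. That is, the post-application robustness of this construction is violated with probability at least $\delta/2$.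
   Context: - $[x]_i^j$ denotes the substring $x_i\cdots x_j$ of a bit string $x$. - $\mathbf{H}_\infty(W)=-\log_2\max_w\Pr[W=w]$. - All logarithms are base 2. - The construction is the robust extractor of Dodis, Katz, Reyzin and Smith (Crypto 2006). - The choice $v=(n-\ell)/2$ with $\ell=(2m-n-2\log(1/\delta))/3$ is the setting that construction prescribes for post-application robustness $\delta$. - The adversary is computationally unbounded and sees both $R$ and $P$. *)

theory Defs
  imports "HOL-Probability.Probability"
begin

text \<open>Bit strings are boolean lists; bit positions are 1-indexed as in the paper.
  substr x i j is the substring x_i ... x_j.\<close>
definition substr :: "bool list \<Rightarrow> nat \<Rightarrow> nat \<Rightarrow> bool list" where
  "substr x i j = take (Suc j - i) (drop (i - 1) x)"

definition bxor :: "bool list \<Rightarrow> bool list \<Rightarrow> bool list" where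
  "bxor x y = map2 (\<noteq>) x y"

definition elem_of :: "'f::field list \<Rightarrow> bool list \<Rightarrow> 'f" where
  "elem_of bs s = (\<Sum>j<length s. if s ! j then bs ! j else 0)"

definition is_F2_basis :: "'f::field list \<Rightarrow> nat \<Rightarrow> bool" where
  "is_F2_basis bs k \<longleftrightarrow> length bs = k \<and> bij_betw (elem_of bs) {s. length s = k} (UNIV :: 'f set)"

definition coords :: "'f::field list \<Rightarrow> nat \<Rightarrow> 'f \<Rightarrow> bool list" where
  "coords bs k x = (THE s. length s = k \<and> elem_of bs s = x)"

definition min_entropy :: "'a pmf \<Rightarrow> real" where
  "min_entropy W = - log 2 (SUP w. pmf W w)"

definition Gen :: "'f::{finite,field} list \<Rightarrow> nat \<Rightarrow> nat \<Rightarrow> bool list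
                     \<Rightarrow> (bool list \<times> ('f \<times> bool list)) pmf" where
  "Gen bs n v w = map_pmf
     (\<lambda>i. let a = elem_of bs (take (n - v) w); b = drop (n - v) w;
              x = coords bs (n - v) (i * a)
          in (substr x (v + 1) (n - v), (i, bxor (substr x 1 v) b)))
     (pmf_of_set (UNIV :: 'f set))"

text \<open>Rep(w, (i', sigma')): None plays the role of the failure symbol.\<close>
definition Rep :: "'f::field list \<Rightarrow> nat \<Rightarrow> nat \<Rightarrow> bool list \<Rightarrow> 'f \<times> bool list
                     \<Rightarrow> bool list option" where
  "Rep bs n v w P' = (case P' of (i', \<sigma>') \<Rightarrow>
     (let a = elem_of bs (take (n - v) w); b = drop (n - v) w;
          x = coords bs (n - v) (i' * a)
      in if \<sigma>' = bxor (substr x 1 v) b then Some (substr x (v + 1) (n - v)) else None))"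

definition attack_success_prob ::
  "'f::{finite,field} list \<Rightarrow> nat \<Rightarrow> nat \<Rightarrow> bool list pmf
     \<Rightarrow> (bool list \<Rightarrow> 'f \<times> bool list \<Rightarrow> 'f \<times> bool list) \<Rightarrow> real" where
  "attack_success_prob bs n v W A =
     measure_pmf.prob
       (do { w \<leftarrow> W; (R, P) \<leftarrow> Gen bs n v w;
             return_pmf (A R P \<noteq> P \<and> Rep bs n v w (A R P) \<noteq> None) })
       {True}"

end

theory Submission
  imports Defs "HOL-Number_Theory.Residues"
begin

text \<open>Let \<open>n - v = v + l\<close> and choose the basis \<open>u\<^sub>1 \<dots> u\<^sub>l, f\<^sub>1 \<dots> f\<^sub>v\<^sub>-\<^sub>l, d u\<^sub>1 \<dots> d u\<^sub>l\<close>
  with \<open>d \<noteq> 0\<close>. For a key \<open>i\<close> split the coordinates of \<open>i a\<close> into blocks \<open>x\<^sub>1 x\<^sub>2 x\<^sub>3\<close> of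
  lengths \<open>l\<close>, \<open>v - l\<close> and \<open>l\<close>. If the last \<open>v - l\<close> bits of \<open>w\<close> vanish, then \<open>\<sigma>\<close> reveals
  \<open>x\<^sub>2\<close>, and \<open>R = x\<^sub>3\<close>. Because the last \<open>l\<close> basis vectors are \<open>d\<close> times the first \<open>l\<close>, the
  unknown block \<open>x\<^sub>1\<close> affects only the last \<open>l\<close> coordinates of \<open>d i a\<close>, so the adversary can
  compute the first \<open>v\<close> coordinates of \<open>d i a\<close>. Coordinates are additive, hence the forged
  public value \<open>(i + d i, \<sigma> \<oplus> [d i a]\<^sub>1\<^sup>v)\<close> passes \<open>Rep\<close> whenever \<open>i \<noteq> 0\<close>. With \<open>W\<close>
  uniform on a set of \<open>2\<^sup>m\<close> strings containing all \<open>2\<^bsup>v + 2l\<^esup>\<close> such \<open>w\<close>, the attack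
  succeeds with probability at least \<open>2\<^bsup>v + 2l - m\<^esup> / 2 = \<delta> / 2\<close>, as \<open>m = v + 2l + log (1/\<delta>)\<close>.\<close>

section \<open>Subset sums in characteristic 2\<close>

lemma CHAR_eq_2_if_card_eq_power_2:
  assumes "CARD('f::{finite,field}) = 2 ^ N"
  shows "CHAR('f) = 2"
proof -
  have prime: "prime CHAR('f)"
    by (intro prime_CHAR_semidom finite_imp_CHAR_pos) simp
  then have "CHAR('f) dvd 2"
    using CHAR_dvd_CARD[where 'a='f] assms prime_dvd_power by metis
  with prime show ?thesis
    by (simp add: primes_dvd_imp_eq)
qed

lemma add_self_CHAR_2: "CHAR('a::ring_1) = 2 \<Longrightarrow> x + x = (0::'a)"
  by (metis minus_CHAR_2 diff_self)

text \<open>In characteristic 2 these are the \<open>\<bbbF>\<^sub>2\<close>-span and \<open>\<bbbF>\<^sub>2\<close>-linear independence.\<close>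

definition subset_sums :: "'a::comm_monoid_add set \<Rightarrow> 'a set" where
  "subset_sums A = Sum ` Pow A"

definition sum_independent :: "'a::comm_monoid_add set \<Rightarrow> bool" where
  "sum_independent A \<longleftrightarrow> (\<forall>X\<subseteq>A. \<Sum>X = 0 \<longrightarrow> X = {})"

lemma subset_subset_sums: "A \<subseteq> subset_sums A"
proof
  fix a assume "a \<in> A"
  then have "\<Sum>{a} \<in> Sum ` Pow A" by blast
  then show "a \<in> subset_sums A" by (simp add: subset_sums_def)
qed

lemma card_subset_sums_le:
  fixes A :: "'a::{finite,comm_monoid_add} set"
  shows "card (subset_sums A) \<le> 2 ^ card A"
proof -
  have "card (Sum ` Pow A) \<le> card (Pow A)" by (rule card_image_le) simp
  then show ?thesis by (simp add: subset_sums_def card_Pow)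
qed

lemma ex_not_mem_if_card_less:
  fixes S :: "'a::finite set"
  assumes "card S < CARD('a)"
  obtains u where "u \<notin> S"
  using assms by (cases "S = UNIV") auto

lemma subset_sums_insert:
  fixes A :: "'a::{finite,comm_monoid_add} set"
  shows "subset_sums (insert u A) \<subseteq> subset_sums A \<union> (\<lambda>z. u + z) ` subset_sums A"
proof
  fix x assume "x \<in> subset_sums (insert u A)"
  then obtain X where X: "X \<subseteq> insert u A" "x = \<Sum>X"
    by (auto simp: subset_sums_def)
  show "x \<in> subset_sums A \<union> (\<lambda>z. u + z) ` subset_sums A"
  proof (cases "u \<in> X")
    case True
    then have "x = u + \<Sum>(X - {u})" using X(2) by (simp add: sum.remove)
    moreover have "X - {u} \<subseteq> A" using X(1) by blast
    ultimately show ?thesis by (auto simp: subset_sums_def)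
  next
    case False
    then show ?thesis using X by (auto simp: subset_sums_def)
  qed
qed

lemma sum_independent_insert:
  fixes A :: "'a::{finite,ab_group_add} set"
  assumes add_self: "\<And>x::'a. x + x = 0"
    and "sum_independent A" and "u \<notin> subset_sums A"
  shows "sum_independent (insert u A)"
  unfolding sum_independent_def
proof (intro allI impI)
  fix X assume X: "X \<subseteq> insert u A" "\<Sum>X = 0"
  show "X = {}"
  proof (cases "u \<in> X")
    case True
    then have "u + \<Sum>(X - {u}) = 0" using X(2) by (simp add: sum.remove)
    then have "u = \<Sum>(X - {u})" by (metis add_right_cancel add_self)
    moreover have "X - {u} \<subseteq> A" using X(1) by blast
    ultimately have "u \<in> subset_sums A" by (auto simp: subset_sums_def)
    with assms(3) show ?thesis by contradiction
  next
    case False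
    with X assms(2) show ?thesis by (auto simp: sum_independent_def)
  qed
qed

lemma sum_independent_extend:
  fixes A :: "'a::{finite,ab_group_add} set"
  assumes add_self: "\<And>x::'a. x + x = 0"
    and "sum_independent A" and "2 ^ (card A + k) \<le> CARD('a)"
  shows "\<exists>B. A \<inter> B = {} \<and> card B = k \<and> sum_independent (A \<union> B)"
  using assms(3)
proof (induction k)
  case 0
  with assms(2) show ?case by auto
next
  case (Suc k)
  then obtain B where B: "A \<inter> B = {}" "card B = k" "sum_independent (A \<union> B)"
    by fastforce
  have "card (subset_sums (A \<union> B)) \<le> 2 ^ (card A + k)"
    using card_subset_sums_le[of "A \<union> B"] B(1,2) by (simp add: card_Un_disjoint)
  also have "\<dots> < 2 ^ (card A + Suc k)" by simp
  also have "\<dots> \<le> CARD('a)" by (fact Suc.prems)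
  finally obtain u where u: "u \<notin> subset_sums (A \<union> B)"
    by (rule ex_not_mem_if_card_less)
  then have "u \<notin> A \<union> B" using subset_subset_sums by blast
  moreover have "sum_independent (insert u (A \<union> B))"
    using add_self B(3) u by (rule sum_independent_insert)
  ultimately show ?case
    using B by (intro exI[of _ "insert u B"]) auto
qed

lemma card_vimage_mult:
  fixes c :: "'f::field"
  assumes "c \<noteq> 0"
  shows "card ((*) c -` S) = card S"
proof (rule card_vimage_inj)
  show "inj ((*) c)" using assms by (simp add: inj_mult_left)
  have "y = c * (y / c)" for y using assms by simp
  then show "S \<subseteq> range ((*) c)" by blast
qed

lemma sum_independent_pairs_exist:
  fixes d :: "'f::{finite,field}"
  assumes char2: "CHAR('f) = 2" and d: "d \<noteq> 0" "d \<noteq> 1"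
    and "2 ^ (2 * k) \<le> CARD('f)"
  shows "\<exists>us. length us = k \<and> card (set us \<union> (*) d ` set us) = 2 * k
           \<and> sum_independent (set us \<union> (*) d ` set us)"
  using assms(4)
proof (induction k)
  case 0
  show ?case by (auto simp: sum_independent_def)
next
  case (Suc k)
  have add_self: "\<And>x::'f. x + x = 0" using char2 by (rule add_self_CHAR_2)
  have "(2::nat) ^ (2 * k) \<le> 2 ^ (2 * Suc k)" by (intro power_increasing) auto
  with Suc obtain us where us: "length us = k" "card (set us \<union> (*) d ` set us) = 2 * k"
      "sum_independent (set us \<union> (*) d ` set us)"
    by fastforce
  define A where "A = set us \<union> (*) d ` set us"
  have d1: "d + 1 \<noteq> 0" using d(2) by (metis minus_CHAR_2[OF char2] right_minus_eq)
  text \<open>Adding \<open>u\<close> and then \<open>d u\<close> to \<open>A\<close> keeps it independent unless \<open>u\<close>, \<open>d u\<close> or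
    \<open>(d + 1) u\<close> is a subset sum of \<open>A\<close>.\<close>
  define bad where
    "bad = subset_sums A \<union> (*) d -` subset_sums A \<union> (*) (d + 1) -` subset_sums A"
  have "card bad \<le> 3 * card (subset_sums A)"
    using card_Un_le[of "subset_sums A \<union> (*) d -` subset_sums A" "(*) (d + 1) -` subset_sums A"]
      card_Un_le[of "subset_sums A" "(*) d -` subset_sums A"]
      card_vimage_mult[OF d(1), of "subset_sums A"] card_vimage_mult[OF d1, of "subset_sums A"]
    unfolding bad_def by linarith
  also have "\<dots> \<le> 3 * 2 ^ (2 * k)"
    using card_subset_sums_le[of A] us(2) by (simp add: A_def)
  also have "\<dots> < 2 ^ (2 * Suc k)" by simp
  also have "\<dots> \<le> CARD('f)" by (fact Suc.prems)
  finally obtain u where "u \<notin> bad" by (rule ex_not_mem_if_card_less)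
  then have u: "u \<notin> subset_sums A" "d * u \<notin> subset_sums A" "(d + 1) * u \<notin> subset_sums A"
    by (auto simp: bad_def)
  have indep_u: "sum_independent (insert u A)"
    using add_self _ u(1) by (rule sum_independent_insert) (simp add: A_def us(3))
  have du: "d * u \<notin> subset_sums (insert u A)"
  proof
    assume "d * u \<in> subset_sums (insert u A)"
    with subset_sums_insert u(2) obtain z where z: "z \<in> subset_sums A" "d * u = u + z"
      by blast
    have "(d + 1) * u = z + (u + u)" using z(2) by (simp add: algebra_simps)
    with z(1) u(3) show False by (simp add: add_self)
  qed
  have "u \<notin> A" "d * u \<notin> insert u A"
    using u(1) du subset_subset_sums by blast+
  moreover have "set (us @ [u]) \<union> (*) d ` set (us @ [u]) = insert (d * u) (insert u A)"
    by (auto simp: A_def)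
  moreover have "sum_independent (insert (d * u) (insert u A))"
    using add_self indep_u du by (rule sum_independent_insert)
  ultimately show ?case
    using us(1,2) by (intro exI[of _ "us @ [u]"]) (simp add: A_def)
qed

section \<open>Bit strings and coordinates\<close>

lemma card_bool_lists_length_eq: "card {s :: bool list. length s = N} = 2 ^ N"
  using card_lists_length_eq[of "UNIV :: bool set" N] by simp

lemma length_bxor [simp]: "length (bxor s t) = min (length s) (length t)"
  by (simp add: bxor_def)

lemma nth_bxor [simp]: "j < length s \<Longrightarrow> j < length t \<Longrightarrow> bxor s t ! j = (s ! j \<noteq> t ! j)"
  by (simp add: bxor_def)

lemma take_bxor: "take k (bxor s t) = bxor (take k s) (take k t)"
  by (simp add: bxor_def take_map take_zip)

lemma drop_bxor: "drop k (bxor s t) = bxor (drop k s) (drop k t)"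
  by (simp add: bxor_def drop_map drop_zip)

lemma bxor_replicate_False: "length s = k \<Longrightarrow> bxor s (replicate k False) = s"
  by (intro nth_equalityI) auto

lemma bxor_left_commute: "bxor (bxor p q) r = bxor (bxor p r) q"
  by (intro nth_equalityI) auto

lemma elem_of_eq_Sum_image:
  assumes "distinct bs" "length s = length bs"
  shows "elem_of bs s = \<Sum>((!) bs ` {j. j < length s \<and> s ! j})"
proof -
  have "elem_of bs s = sum ((!) bs) {j \<in> {..<length s}. s ! j}"
    unfolding elem_of_def by (rule sum.inter_filter[symmetric]) simp
  also have "\<dots> = \<Sum>((!) bs ` {j. j < length s \<and> s ! j})"
    using assms by (subst sum.reindex) (auto intro!: inj_on_nth)
  finally show ?thesis .
qed

lemma elem_of_bxor:
  fixes bs :: "'f::field list"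
  assumes "CHAR('f) = 2" and "length s = length t"
  shows "elem_of bs (bxor s t) = elem_of bs s + elem_of bs t"
proof -
  have "(if s ! j \<noteq> t ! j then bs ! j else 0) = (if s ! j then bs ! j else 0) + (if t ! j then bs ! j else 0)"
    for j
    using add_self_CHAR_2[OF assms(1)] by auto
  then show ?thesis
    using assms(2) by (simp add: elem_of_def sum.distrib)
qed

lemma is_F2_basis_if_sum_independent:
  fixes bs :: "'f::{finite,field} list"
  assumes card: "CARD('f) = 2 ^ N" and bs: "length bs = N" "distinct bs" "sum_independent (set bs)"
  shows "is_F2_basis bs N"
proof -
  have char2: "CHAR('f) = 2" using card by (rule CHAR_eq_2_if_card_eq_power_2)
  have inj: "inj_on (elem_of bs) {s. length s = N}"
  proof (rule inj_onI)
    fix s t assume s: "s \<in> {s. length s = N}" and t: "t \<in> {s. length s = N}"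
      and eq: "elem_of bs s = elem_of bs t"
    define J where "J = {j. j < N \<and> bxor s t ! j}"
    have "elem_of bs (bxor s t) = 0"
      using eq s t by (simp add: elem_of_bxor[OF char2] add_self_CHAR_2[OF char2])
    then have "\<Sum>((!) bs ` J) = 0"
      using s t bs by (simp add: elem_of_eq_Sum_image J_def)
    moreover have "(!) bs ` J \<subseteq> set bs" using bs(1) by (auto simp: J_def)
    ultimately have "J = {}" using bs(3) by (auto simp: sum_independent_def)
    with s t show "s = t" by (intro nth_equalityI) (auto simp: J_def)
  qed
  then have "card (elem_of bs ` {s. length s = N}) = CARD('f)"
    by (simp add: card_image card_bool_lists_length_eq card)
  then have "elem_of bs ` {s. length s = N} = UNIV"
    by (intro card_subset_eq) auto
  with inj bs(1) show ?thesis
    by (simp add: is_F2_basis_def bij_betw_def)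
qed

lemma structured_F2_basis_exists:
  assumes card: "CARD('f::{finite,field}) = 2 ^ (v + l)" and "l \<le> v"
  obtains d :: "'f::{finite,field}" and us fs
  where "d \<noteq> 0" "length us = l" "length fs = v - l"
    "is_F2_basis (us @ fs @ map ((*) d) us) (v + l)"
proof -
  have char2: "CHAR('f) = 2" using card by (rule CHAR_eq_2_if_card_eq_power_2)
  obtain d :: 'f and us where d: "d \<noteq> 0" and us: "length us = l"
    "card (set us \<union> (*) d ` set us) = 2 * l" "sum_independent (set us \<union> (*) d ` set us)"
  proof (cases "l = 0")
    case True
    then show ?thesis using that[of 1 "[]"] by (simp add: sum_independent_def)
  next
    case False
    then have "(2::nat) ^ 2 \<le> 2 ^ (v + l)" using \<open>l \<le> v\<close> by (intro power_increasing) auto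
    then have "card {0::'f, 1} < CARD('f)" using card by simp
    then obtain d :: 'f where "d \<notin> {0, 1}" by (rule ex_not_mem_if_card_less)
    moreover have "(2::nat) ^ (2 * l) \<le> 2 ^ (v + l)" using \<open>l \<le> v\<close> by (intro power_increasing) auto
    ultimately show ?thesis
      using sum_independent_pairs_exist[OF char2, of d l] card that by auto
  qed
  define A where "A = set us \<union> (*) d ` set us"
  have "2 ^ (card A + (v - l)) \<le> CARD('f)"
    using us(2) \<open>l \<le> v\<close> card by (simp add: A_def)
  then obtain B where B: "A \<inter> B = {}" "card B = v - l" "sum_independent (A \<union> B)"
    using sum_independent_extend[OF add_self_CHAR_2[OF char2]] us(3) unfolding A_def by blast
  obtain fs where fs: "set fs = B" "distinct fs"
    using finite_distinct_list[of B] by auto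
  define bs where "bs = us @ fs @ map ((*) d) us"
  have "set bs = A \<union> B" using fs(1) by (auto simp: bs_def A_def)
  moreover have lengths: "length fs = v - l" "length bs = v + l"
    using fs B(2) us(1) \<open>l \<le> v\<close> by (auto simp: bs_def distinct_card[symmetric])
  moreover have "card (A \<union> B) = v + l"
    using B us(2) \<open>l \<le> v\<close> by (simp add: card_Un_disjoint A_def)
  ultimately have "is_F2_basis bs (v + l)"
    using B(3) card by (intro is_F2_basis_if_sum_independent) (auto simp: card_distinct)
  with d us(1) lengths(1) that show ?thesis by (simp add: bs_def)
qed

lemma F2_basis_unique_coords:
  assumes "is_F2_basis bs N"
  shows "\<exists>!s. length s = N \<and> elem_of bs s = x"
proof -
  have bij: "bij_betw (elem_of bs) {s. length s = N} UNIV"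
    using assms by (simp add: is_F2_basis_def)
  then obtain s where "length s = N" "elem_of bs s = x"
    by (metis (mono_tags) UNIV_I bij_betw_iff_bijections mem_Collect_eq)
  moreover have "t = s" if "length t = N" "elem_of bs t = x" for t
    using bij that calculation by (simp add: bij_betw_def inj_on_def)
  ultimately show ?thesis by blast
qed

lemma length_coords: "is_F2_basis bs N \<Longrightarrow> length (coords bs N x) = N"
  unfolding coords_def using theI'[OF F2_basis_unique_coords[of bs N x]] by simp

lemma elem_of_coords: "is_F2_basis bs N \<Longrightarrow> elem_of bs (coords bs N x) = x"
  unfolding coords_def using theI'[OF F2_basis_unique_coords[of bs N x]] by simp

lemma coords_elem_of:
  assumes "is_F2_basis bs N" "length s = N"
  shows "coords bs N (elem_of bs s) = s"
  unfolding coords_def using assms(2) by (intro the1_equality F2_basis_unique_coords[OF assms(1)]) simp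

lemma coords_add:
  fixes bs :: "'f::field list"
  assumes "CHAR('f) = 2" and basis: "is_F2_basis bs N"
  shows "coords bs N (x + y) = bxor (coords bs N x) (coords bs N y)"
proof -
  have "length (bxor (coords bs N x) (coords bs N y)) = N"
    using basis by (simp add: length_coords)
  moreover have "elem_of bs (bxor (coords bs N x) (coords bs N y)) = x + y"
    using basis by (simp add: elem_of_bxor[OF assms(1)] length_coords elem_of_coords)
  ultimately show ?thesis
    using coords_elem_of[OF basis] by metis
qed

lemma elem_of_append:
  assumes "length s \<le> length bs"
  shows "elem_of bs (s @ t) = elem_of bs s + elem_of (drop (length s) bs) t"
proof -
  have split: "(\<Sum>j<a + b. g j) = (\<Sum>j<a. g j) + (\<Sum>j<b. g (a + j))"
    for a b and g :: "nat \<Rightarrow> 'b::comm_monoid_add"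
    by (induction b) (simp_all add: add.assoc)
  have "elem_of bs (s @ t) = (\<Sum>j<length s. if (s @ t) ! j then bs ! j else 0)
      + (\<Sum>j<length t. if (s @ t) ! (length s + j) then bs ! (length s + j) else 0)"
    unfolding elem_of_def by (simp add: split)
  also have "(\<Sum>j<length s. if (s @ t) ! j then bs ! j else 0) = elem_of bs s"
    unfolding elem_of_def by (intro sum.cong) (auto simp: nth_append)
  also have "(\<Sum>j<length t. if (s @ t) ! (length s + j) then bs ! (length s + j) else 0)
      = elem_of (drop (length s) bs) t"
    unfolding elem_of_def using assms by (intro sum.cong) auto
  finally show ?thesis .
qed

lemma elem_of_append_basis:
  "length s \<le> length bs \<Longrightarrow> elem_of (bs @ bs') s = elem_of bs s"
  unfolding elem_of_def by (intro sum.cong) (auto simp: nth_append)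

lemma elem_of_replicate_False [simp]: "elem_of bs (replicate k False) = 0"
  unfolding elem_of_def by simp

lemma elem_of_map_mult:
  "length s \<le> length bs \<Longrightarrow> elem_of (map ((*) d) bs) s = d * elem_of bs s"
  unfolding elem_of_def by (simp add: sum_distrib_left if_distrib cong: if_cong)

section \<open>The attack\<close>

definition Gen_key :: "'f::field list \<Rightarrow> nat \<Rightarrow> nat \<Rightarrow> bool list \<Rightarrow> 'f
                        \<Rightarrow> bool list \<times> ('f \<times> bool list)" where
  "Gen_key bs n v w i =
     (let a = elem_of bs (take (n - v) w); b = drop (n - v) w; x = coords bs (n - v) (i * a)
      in (substr x (v + 1) (n - v), (i, bxor (substr x 1 v) b)))"

lemma Gen_eq_map_Gen_key: "Gen bs n v w = map_pmf (Gen_key bs n v w) (pmf_of_set UNIV)"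
  unfolding Gen_def Gen_key_def ..

lemma Gen_key_eq:
  fixes bs :: "'f::field list" and w :: "bool list" and i :: 'f
  assumes "is_F2_basis bs (n - v)"
  defines "x \<equiv> coords bs (n - v) (i * elem_of bs (take (n - v) w))"
  shows "Gen_key bs n v w i = (drop v x, (i, bxor (take v x) (drop (n - v) w)))"
proof -
  have "length x = n - v" using assms by (simp add: x_def length_coords)
  then show ?thesis by (simp add: Gen_key_def Let_def substr_def x_def[symmetric])
qed

lemma Rep_accepts_shifted_key:
  fixes bs :: "'f::field list" and w :: "bool list"
  assumes char2: "CHAR('f) = 2" and basis: "is_F2_basis bs (n - v)"
  defines "a \<equiv> elem_of bs (take (n - v) w)" and "b \<equiv> drop (n - v) w"
  shows "Rep bs n v w (i + j, bxor (bxor (take v (coords bs (n - v) (i * a))) b)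
                                   (take v (coords bs (n - v) (j * a)))) \<noteq> None"
proof -
  have "coords bs (n - v) ((i + j) * a)
      = bxor (coords bs (n - v) (i * a)) (coords bs (n - v) (j * a))"
    by (simp add: distrib_right coords_add[OF char2 basis])
  then show ?thesis
    by (simp add: Rep_def Let_def substr_def take_bxor bxor_left_commute[of _ b]
        a_def[symmetric] b_def[symmetric])
qed

lemma take_coords_mult_ignores_prefix:
  fixes us fs :: "'f::field list" and d :: 'f
  defines "bs \<equiv> us @ fs @ map ((*) d) us"
  assumes char2: "CHAR('f) = 2" and basis: "is_F2_basis bs (v + l)"
    and lengths: "length us = l" "length fs = v - l" "l \<le> v" and x: "length x = v + l"
  shows "take v (coords bs (v + l) (d * elem_of bs x))
       = take v (coords bs (v + l) (d * elem_of bs (replicate l False @ drop l x)))"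
proof -
  define x1 where "x1 = take l x"
  have lbs: "length bs = v + l" and l1: "length x1 = l"
    using lengths x by (simp_all add: bs_def x1_def)
  have "elem_of bs x = elem_of bs x1 + elem_of (drop l bs) (drop l x)"
    using elem_of_append[of x1 bs "drop l x"] l1 lbs by (simp add: x1_def)
  moreover have "elem_of bs (replicate l False @ drop l x) = elem_of (drop l bs) (drop l x)"
    using elem_of_append[of "replicate l False" bs "drop l x"] lbs by simp
  moreover have "d * elem_of bs x1 = elem_of bs (replicate v False @ x1)"
  proof -
    have "elem_of bs x1 = elem_of us x1"
      using l1 lengths(1) by (simp add: bs_def elem_of_append_basis)
    moreover have "drop v bs = map ((*) d) us" using lengths by (simp add: bs_def)
    ultimately show ?thesis
      using elem_of_append[of "replicate v False" bs x1] lbs l1 lengths(1)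
      by (simp add: elem_of_map_mult)
  qed
  ultimately have "d * elem_of bs x
      = d * elem_of bs (replicate l False @ drop l x) + elem_of bs (replicate v False @ x1)"
    by (simp add: algebra_simps)
  then have "coords bs (v + l) (d * elem_of bs x)
      = bxor (coords bs (v + l) (d * elem_of bs (replicate l False @ drop l x)))
             (replicate v False @ x1)"
    using l1 by (simp add: coords_add[OF char2 basis] coords_elem_of[OF basis])
  then show ?thesis
    by (simp add: take_bxor bxor_replicate_False length_coords[OF basis])
qed

definition attacker :: "'f::field list \<Rightarrow> 'f \<Rightarrow> nat \<Rightarrow> nat
                         \<Rightarrow> bool list \<Rightarrow> 'f \<times> bool list \<Rightarrow> 'f \<times> bool list" where
  "attacker bs d v l R P = (case P of (i, \<sigma>) \<Rightarrow>
     (i + d * i,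
      bxor \<sigma> (take v (coords bs (v + l) (d * elem_of bs (replicate l False @ drop l \<sigma> @ R))))))"

definition breaks_robustness ::
  "'f::field list \<Rightarrow> nat \<Rightarrow> nat \<Rightarrow> (bool list \<Rightarrow> 'f \<times> bool list \<Rightarrow> 'f \<times> bool list)
     \<Rightarrow> bool list \<Rightarrow> 'f \<Rightarrow> bool" where
  "breaks_robustness bs n v A w i \<longleftrightarrow>
     (case Gen_key bs n v w i of (R, P) \<Rightarrow> A R P \<noteq> P \<and> Rep bs n v w (A R P) \<noteq> None)"

definition zero_padded :: "nat \<Rightarrow> nat \<Rightarrow> bool list set" where
  "zero_padded k z = (\<lambda>u. u @ replicate z False) ` {u. length u = k}"

lemma attacker_breaks_robustness:
  fixes us fs :: "'f::field list" and d :: 'f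
  defines "bs \<equiv> us @ fs @ map ((*) d) us"
  assumes char2: "CHAR('f) = 2" and basis: "is_F2_basis bs (v + l)"
    and lengths: "length us = l" "length fs = v - l" "l \<le> v" and n: "n = 2 * v + l"
    and "d \<noteq> 0" "i \<noteq> 0" and "w \<in> zero_padded (v + 2 * l) (v - l)"
  shows "breaks_robustness bs n v (attacker bs d v l) w i"
proof -
  from \<open>w \<in> zero_padded _ _\<close> obtain u where u: "length u = v + 2 * l"
    and w: "w = u @ replicate (v - l) False"
    by (auto simp: zero_padded_def)
  define a where "a = elem_of bs (take (n - v) w)"
  define x where "x = coords bs (v + l) (i * a)"
  define \<sigma> where "\<sigma> = bxor (take v x) (drop (n - v) w)"
  have N: "n - v = v + l" using n by simp
  have basis': "is_F2_basis bs (n - v)" using basis N by simp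
  have lx: "length x = v + l" using basis by (simp add: x_def length_coords)
  have gen: "Gen_key bs n v w i = (drop v x, (i, \<sigma>))"
    using Gen_key_eq[OF basis', where w=w and i=i] by (simp add: N x_def a_def \<sigma>_def)
  have "drop l \<sigma> = bxor (drop l (take v x)) (replicate (v - l) False)"
    using u by (simp add: \<sigma>_def w N drop_bxor)
  also have "\<dots> = take (v - l) (drop l x)"
    using lx lengths(3) by (simp add: bxor_replicate_False drop_take)
  finally have prefix: "drop l \<sigma> @ drop v x = drop l x"
    using lengths(3) by (metis append_take_drop_id drop_drop le_add_diff_inverse2)
  have "take v (coords bs (v + l) ((d * i) * a)) = take v (coords bs (v + l) (d * elem_of bs x))"
    using basis by (simp add: x_def elem_of_coords mult.assoc)
  also have "\<dots> = take v (coords bs (v + l) (d * elem_of bs (replicate l False @ drop l x)))"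
    using take_coords_mult_ignores_prefix[OF char2 basis[unfolded bs_def] lengths lx]
    by (simp flip: bs_def)
  finally have "attacker bs d v l (drop v x) (i, \<sigma>)
      = (i + d * i, bxor \<sigma> (take v (coords bs (v + l) ((d * i) * a))))"
    by (simp add: attacker_def prefix)
  moreover have "i + d * i \<noteq> i" using \<open>d \<noteq> 0\<close> \<open>i \<noteq> 0\<close> by simp
  moreover have "Rep bs n v w (i + d * i, bxor \<sigma> (take v (coords bs (v + l) ((d * i) * a)))) \<noteq> None"
    using Rep_accepts_shifted_key[OF char2 basis', where w=w and i=i and j="d * i"]
    by (simp add: N \<sigma>_def x_def a_def)
  ultimately show ?thesis
    by (simp add: breaks_robustness_def gen)
qed

section \<open>Success probability\<close>

lemma attack_success_prob_pmf_of_set: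
  fixes A :: "bool list \<Rightarrow> 'f::{finite,field} \<times> bool list \<Rightarrow> 'f \<times> bool list"
  assumes "finite S" "S \<noteq> {}"
  shows "attack_success_prob bs n v (pmf_of_set S) A
       = (\<Sum>w\<in>S. real (card {i. breaks_robustness bs n v A w i})) / (card S * CARD('f))"
proof -
  have "Gen bs n v w \<bind> (\<lambda>(R, P). return_pmf (A R P \<noteq> P \<and> Rep bs n v w (A R P) \<noteq> None))
      = map_pmf (breaks_robustness bs n v A w) (pmf_of_set UNIV)" for w
    unfolding Gen_eq_map_Gen_key map_pmf_def breaks_robustness_def
    by (simp add: bind_assoc_pmf bind_return_pmf split_beta)
  moreover have "pmf (map_pmf (breaks_robustness bs n v A w) (pmf_of_set UNIV)) True
      = card {i. breaks_robustness bs n v A w i} / CARD('f)" for w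
    by (simp add: pmf_map measure_pmf_of_set vimage_def)
  ultimately show ?thesis
    using assms
    by (simp add: attack_success_prob_def measure_pmf_single pmf_bind integral_pmf_of_set
        sum_divide_distrib)
qed

lemma attack_success_prob_ge:
  fixes A :: "bool list \<Rightarrow> 'f::{finite,field} \<times> bool list \<Rightarrow> 'f \<times> bool list"
  assumes "finite S" "G \<subseteq> S"
    and wins: "\<And>w i. w \<in> G \<Longrightarrow> i \<noteq> 0 \<Longrightarrow> breaks_robustness bs n v A w i"
  shows "real (card G) / (2 * real (card S)) \<le> attack_success_prob bs n v (pmf_of_set S) A"
proof (cases "S = {}")
  case True
  then show ?thesis using assms(2) by (simp add: attack_success_prob_def)
next
  case False
  have "CARD('f) \<le> 2 * card {i. breaks_robustness bs n v A w i}" if "w \<in> G" for w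
  proof -
    have "UNIV - {0} \<subseteq> {i. breaks_robustness bs n v A w i}" using wins that by auto
    then have "CARD('f) - 1 \<le> card {i. breaks_robustness bs n v A w i}"
      by (metis card_Diff_singleton card_mono finite UNIV_I)
    moreover have "2 \<le> CARD('f)" using card_mono[of UNIV "{0::'f, 1}"] by simp
    ultimately show ?thesis by linarith
  qed
  then have "card G * CARD('f) \<le> (\<Sum>w\<in>G. 2 * card {i. breaks_robustness bs n v A w i})"
    using sum_mono[of G "\<lambda>_. CARD('f)"] by simp
  also have "\<dots> \<le> (\<Sum>w\<in>S. 2 * card {i. breaks_robustness bs n v A w i})"
    using assms(1,2) by (intro sum_mono2) auto
  finally have "real (card G * CARD('f))
      \<le> 2 * (\<Sum>w\<in>S. real (card {i. breaks_robustness bs n v A w i}))"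
    by (simp only: of_nat_le_iff flip: sum_distrib_left of_nat_sum)
  moreover have "0 < real (card S)" using False assms(1) by (simp add: card_gt_0_iff)
  moreover have "0 < real CARD('f)" by simp
  ultimately show ?thesis
    using False assms(1) by (simp add: attack_success_prob_pmf_of_set field_simps)
qed

lemma min_entropy_pmf_of_set:
  assumes "finite S" "S \<noteq> {}"
  shows "min_entropy (pmf_of_set S) = log 2 (card S)"
proof -
  have "(SUP w. pmf (pmf_of_set S) w) = 1 / card S"
  proof (rule cSup_eq_maximum)
    obtain w where "w \<in> S" using assms(2) by blast
    then show "1 / card S \<in> range (pmf (pmf_of_set S))"
      using assms by (intro image_eqI[where x = w]) auto
  next
    fix y assume "y \<in> range (pmf (pmf_of_set S))"
    then obtain w where "y = pmf (pmf_of_set S) w" by blast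
    then show "y \<le> 1 / card S" using assms by (cases "w \<in> S") auto
  qed
  then show ?thesis
    using assms by (simp add: min_entropy_def log_divide card_gt_0_iff)
qed

lemma card_zero_padded: "card (zero_padded k z) = 2 ^ k"
  by (simp add: zero_padded_def card_image inj_on_def card_bool_lists_length_eq)

lemma obtain_subset_between:
  assumes "G \<subseteq> U" "card G \<le> k" "k \<le> card U" "finite U"
  obtains S where "G \<subseteq> S" "S \<subseteq> U" "card S = k"
proof -
  have "k - card G \<le> card (U - G)"
    using assms by (simp add: card_Diff_subset finite_subset)
  then obtain T where T: "T \<subseteq> U - G" "card T = k - card G"
    by (meson obtain_subset_with_card_n)
  have "finite G" "finite T" using assms T finite_subset by blast+
  then have "card (G \<union> T) = k"
    using T assms(2) by (subst card_Un_disjoint) auto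
  with T assms(1) show ?thesis using that[of "G \<union> T"] by blast
qed

lemma zero_padded_extends_to_source:
  assumes "k \<le> j" "j \<le> k + z"
  obtains S where "zero_padded k z \<subseteq> S" "S \<subseteq> {w. length w = k + z}" "card S = 2 ^ j"
proof -
  have "zero_padded k z \<subseteq> {w. length w = k + z}" by (auto simp: zero_padded_def)
  moreover have "card (zero_padded k z) \<le> 2 ^ j"
    unfolding card_zero_padded using assms(1) by (intro power_increasing) auto
  moreover have "2 ^ j \<le> card {w :: bool list. length w = k + z}"
    unfolding card_bool_lists_length_eq using assms(2) by (intro power_increasing) auto
  moreover have "finite {w :: bool list. length w = k + z}"
    using finite_lists_length_eq[of "UNIV :: bool set" "k + z"] by simp
  ultimately show thesis using that by (rule obtain_subset_between)
qed

lemma theorem3_parameters: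
  fixes n l v :: nat and m :: int and \<delta> :: real
  assumes "0 < \<delta>" "\<delta> < 1" "m \<le> int n"
    and "real l = (2 * real_of_int m - real n - 2 * log 2 (1 / \<delta>)) / 3"
    and "real v = (real n - real l) / 2"
  obtains L :: nat where "n = 2 * v + l" "l \<le> v" "m = int (v + 2 * l + L)" "\<delta> = 1 / 2 ^ L"
proof -
  have "real n = real (2 * v + l)" using assms(5) by (simp add: field_simps)
  then have n: "n = 2 * v + l" by (simp only: of_nat_eq_iff)
  define L where "L = m - int v - 2 * int l"
  have log: "log 2 (1 / \<delta>) = L" using assms(4) n by (simp add: L_def)
  have "0 < log 2 (1 / \<delta>)" using assms(1,2) by simp
  then have L: "0 < L" using log by simp
  have "1 / \<delta> = 2 powr log 2 (1 / \<delta>)" using assms(1) by simp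
  also have "\<dots> = 2 ^ nat L" using L by (simp add: log powr_realpow[symmetric])
  finally have "\<delta> = 1 / 2 ^ nat L" using assms(1) by (simp add: field_simps)
  moreover have "m = int (v + 2 * l + nat L)" using L by (simp add: L_def)
  moreover have "l \<le> v" using assms(3) n L by (simp add: L_def)
  ultimately show ?thesis using n that by blast
qed

theorem theorem3:
  fixes n l v :: nat and m :: int and \<delta> :: real
  assumes "0 < \<delta>" and "\<delta> < 1"
    and "m \<le> int n"
    and "real l = (2 * real_of_int m - real n - 2 * log 2 (1 / \<delta>)) / 3"
    and "real v = (real n - real l) / 2"
    and "CARD('f::{finite,field}) = 2 ^ (n - v)"
  shows "\<exists>(bs :: 'f list) (W :: bool list pmf) A.
           is_F2_basis bs (n - v)
         \<and> set_pmf W \<subseteq> {w. length w = n}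
         \<and> min_entropy W = real_of_int m
         \<and> attack_success_prob bs n v W A \<ge> \<delta> / 2"
proof -
  obtain L where n: "n = 2 * v + l" and "l \<le> v" and m: "m = int (v + 2 * l + L)"
    and \<delta>: "\<delta> = 1 / 2 ^ L"
    using assms(1-5) by (rule theorem3_parameters)
  have N: "n - v = v + l" using n by simp
  have card: "CARD('f) = 2 ^ (v + l)" using assms(6) N by simp
  then obtain d :: 'f and us fs where "d \<noteq> 0" "length us = l" "length fs = v - l"
    and basis: "is_F2_basis (us @ fs @ map ((*) d) us) (v + l)"
    using \<open>l \<le> v\<close> by (rule structured_F2_basis_exists)
  define bs where "bs = us @ fs @ map ((*) d) us"
  define G where "G = zero_padded (v + 2 * l) (v - l)"
  have "v + 2 * l \<le> v + 2 * l + L" "v + 2 * l + L \<le> (v + 2 * l) + (v - l)"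
    using assms(3) m n by simp_all
  then obtain S where S: "G \<subseteq> S" "S \<subseteq> {w. length w = (v + 2 * l) + (v - l)}"
      "card S = 2 ^ (v + 2 * l + L)"
    unfolding G_def by (rule zero_padded_extends_to_source)
  then have "S \<subseteq> {w. length w = n}" "finite S" "S \<noteq> {}"
    using n \<open>l \<le> v\<close> by (auto intro: card_ge_0_finite)
  have "breaks_robustness bs n v (attacker bs d v l) w i" if "w \<in> G" "i \<noteq> 0" for w i
    unfolding bs_def
    by (rule attacker_breaks_robustness[OF CHAR_eq_2_if_card_eq_power_2[OF card] basis
        \<open>length us = l\<close> \<open>length fs = v - l\<close> \<open>l \<le> v\<close> n \<open>d \<noteq> 0\<close> that(2) that(1)[unfolded G_def]])
  then have "real (card G) / (2 * real (card S))
      \<le> attack_success_prob bs n v (pmf_of_set S) (attacker bs d v l)"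
    by (rule attack_success_prob_ge[OF \<open>finite S\<close> S(1)])
  moreover have "real (card G) / (2 * real (card S)) = \<delta> / 2"
    by (simp add: G_def card_zero_padded S(3) \<delta> power_add)
  moreover have "min_entropy (pmf_of_set S) = m"
    using \<open>finite S\<close> \<open>S \<noteq> {}\<close> by (simp add: min_entropy_pmf_of_set S(3) m log_nat_power)
  ultimately show ?thesis
    using basis \<open>S \<subseteq> {w. length w = n}\<close> \<open>finite S\<close> \<open>S \<noteq> {}\<close>
    by (intro exI[of _ bs] exI[of _ "pmf_of_set S"] exI[of _ "attacker bs d v l"])
      (simp add: bs_def N)
qed

end
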